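(* For every positive integer $r$, $\delta(3r+1) \ge r$.
   Context: A double-$n$ string is a string of length $2n$ over an alphabet of $n$ symbols in which each symbol appears exactly twice. Positions in the string are numbered $1,\dots,2n$. The distance between two distinct symbols is the minimum, over an occurrence of the first symbol and an occurrence of the second, of the absolute difference of their positions (so adjacent entries have distance $1$). The diameter of a double-$n$ string ($n\ge 2$) is the maximum of the distance over all pairs of distinct symbols. $\delta(n)$ denotes the minimum diameter over all double-$n$ strings. *)

theory Defs
  imports Main
begin

definition double_string :: "nat \<Rightarrow> nat list \<Rightarrow> bool" where
  "double_string n s \<longleftrightarrow> length s = 2 * n \<and> set s \<subseteq> {0..<n}
     \<and> (\<forall>a\<in>{0..<n}. count_list s a = 2)"

definition sym_dist :: "nat list \<Rightarrow> nat \<Rightarrow> nat \<Rightarrow> nat" where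
  "sym_dist s a b = Min {nat \<bar>int i - int j\<bar> | i j.
      i < length s \<and> j < length s \<and> s ! i = a \<and> s ! j = b}"

definition diameter :: "nat \<Rightarrow> nat list \<Rightarrow> nat" where
  "diameter n s = Max {sym_dist s a b | a b. a < n \<and> b < n \<and> a \<noteq> b}"

definition delta :: "nat \<Rightarrow> nat" where
  "delta n = Min {diameter n s | s. double_string n s}"

end

theory Submission
  imports Defs
begin

text \<open>Let a be the first symbol and let 0 and p be its two positions. A symbol at distance
less than r from a occupies one of the at most 3(r - 1) positions within distance r - 1
of 0 or p (other than 0 and p themselves). When 3r \<le> n + 1 this is fewer than the
n - 1 symbols other than a, so some symbol is at distance at least r from a, and the
diameter of every double-n string is at least r.\<close>

lemma count_list_upt: "count_list [0..<n] a = (if a < n then 1 else 0)"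
  by (induction n) auto

lemma double_string_upt_upt: "double_string n ([0..<n] @ [0..<n])"
  unfolding double_string_def by (auto simp: count_list_upt)

lemma finite_double_strings: "finite {s. double_string n s}"
proof (rule finite_subset)
  show "{s. double_string n s} \<subseteq> {s. set s \<subseteq> {0..<n} \<and> length s = 2 * n}"
    unfolding double_string_def by auto
qed (rule finite_lists_length_eq, simp)

lemma double_string_nth_less:
  assumes "double_string n s" "i < length s"
  shows "s ! i < n"
proof -
  have "s ! i \<in> set s"
    using assms(2) by (rule nth_mem)
  then show ?thesis
    using assms(1) by (auto simp: double_string_def)
qed

lemma double_string_occurs:
  assumes "double_string n s" "a < n"
  shows "a \<in> set s"
proof -
  have "count_list s a = 2"
    using assms by (simp add: double_string_def)
  then show ?thesis
    by (metis count_list_0_iff zero_neq_numeral)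
qed

lemma card_positions_double_string:
  assumes "double_string n s" "a < n"
  shows "card {i. i < length s \<and> s ! i = a} = 2"
proof -
  have "length (filter ((=) a) s) = 2"
    using assms by (simp add: double_string_def count_list_eq_length_filter)
  then show ?thesis
    unfolding length_filter_conv_card by (simp add: eq_commute[of a])
qed

lemma sym_dist_geI:
  assumes "i < length s" "s ! i = a" "j < length s" "s ! j = b"
    and "\<And>i j. \<lbrakk>i < length s; j < length s; s ! i = a; s ! j = b\<rbrakk> \<Longrightarrow> d \<le> nat \<bar>int i - int j\<bar>"
  shows "d \<le> sym_dist s a b"
proof -
  let ?D = "{nat \<bar>int i - int j\<bar> | i j. i < length s \<and> j < length s \<and> s ! i = a \<and> s ! j = b}"
  have "?D \<subseteq> (\<lambda>(i, j). nat \<bar>int i - int j\<bar>) ` ({..<length s} \<times> {..<length s})"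
    by auto
  then have "finite ?D"
    by (rule finite_subset) auto
  moreover have "?D \<noteq> {}"
    using assms(1-4) by blast
  ultimately show ?thesis
    unfolding sym_dist_def using assms(5) by auto
qed

lemma sym_dist_le_diameter:
  assumes "a < n" "b < n" "a \<noteq> b"
  shows "sym_dist s a b \<le> diameter n s"
proof -
  let ?M = "{sym_dist s a b | a b. a < n \<and> b < n \<and> a \<noteq> b}"
  have "?M \<subseteq> (\<lambda>(a, b). sym_dist s a b) ` ({..<n} \<times> {..<n})"
    by auto
  then have "finite ?M"
    by (rule finite_subset) auto
  then show ?thesis
    unfolding diameter_def using assms by (auto intro: Max_ge)
qed

lemma double_string_far_symbol:
  assumes ds: "double_string n s" and r: "1 \<le> r" "3 * r \<le> n + 1"
  shows "\<exists>b<n. b \<noteq> s ! 0 \<and> r \<le> sym_dist s (s ! 0) b"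
proof -
  define a where "a = s ! 0"
  have "0 < length s"
    using ds r by (simp add: double_string_def)
  then have "a < n"
    unfolding a_def by (rule double_string_nth_less[OF ds])
  obtain x y where xy: "{i. i < length s \<and> s ! i = a} = {x, y}"
    using card_positions_double_string[OF ds \<open>a < n\<close>] by (auto simp: card_2_iff)
  have "0 \<in> {i. i < length s \<and> s ! i = a}"
    using \<open>0 < length s\<close> by (simp add: a_def)
  then obtain p where p: "{i. i < length s \<and> s ! i = a} = {0, p}"
    unfolding xy by blast
  define J where "J = {1..<r} \<union> {p - (r - 1)..<p} \<union> {p + 1..<p + r}"
  have "card J \<le> card {1..<r} + card {p - (r - 1)..<p} + card {p + 1..<p + r}"
    unfolding J_def by (meson add_mono_thms_linordered_semiring(3) card_Un_le le_trans)
  also have "\<dots> \<le> 3 * r - 3"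
    by simp
  finally have "card (nth s ` J) \<le> 3 * r - 3"
    using card_image_le[of J "nth s"] by (simp add: J_def)
  also have "\<dots> < card ({..<n} - {a})"
    using \<open>a < n\<close> r by simp
  finally have "\<not> {..<n} - {a} \<subseteq> nth s ` J"
    using card_mono[of "nth s ` J" "{..<n} - {a}"] by (auto simp: J_def)
  then obtain b where b: "b < n" "b \<noteq> a" "b \<notin> nth s ` J"
    by blast
  then obtain j where "j < length s" "s ! j = b"
    using double_string_occurs[OF ds] by (metis in_set_conv_nth)
  then have "r \<le> sym_dist s a b"
  proof (rule sym_dist_geI[OF \<open>0 < length s\<close> a_def[symmetric]])
    fix i j
    assume ij: "i < length s" "j < length s" "s ! i = a" "s ! j = b"
    then have "i = 0 \<or> i = p"
      using p by blast
    moreover have "j \<notin> J" "j \<noteq> i"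
      using b ij by auto
    ultimately show "r \<le> nat \<bar>int i - int j\<bar>"
      unfolding J_def by auto
  qed
  then show ?thesis
    using b unfolding a_def by blast
qed

lemma diameter_ge:
  assumes "double_string n s" "3 * r \<le> n + 1"
  shows "r \<le> diameter n s"
proof (cases "r = 0")
  case False
  then obtain b where b: "b < n" "b \<noteq> s ! 0" "r \<le> sym_dist s (s ! 0) b"
    using double_string_far_symbol[OF assms(1) _ assms(2)] by auto
  have "0 < length s"
    using assms(1) b(1) by (simp add: double_string_def)
  then have "s ! 0 < n"
    by (rule double_string_nth_less[OF assms(1)])
  then have "sym_dist s (s ! 0) b \<le> diameter n s"
    using b by (intro sym_dist_le_diameter) auto
  with b(3) show ?thesis
    by simp
qed simp

lemma delta_ge:
  assumes "3 * r \<le> n + 1"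
  shows "r \<le> delta n"
proof -
  have "finite {diameter n s | s. double_string n s}"
    using finite_double_strings by (rule finite_image_set)
  moreover have "{diameter n s | s. double_string n s} \<noteq> {}"
    using double_string_upt_upt by blast
  ultimately show ?thesis
    unfolding delta_def using diameter_ge[OF _ assms] by auto
qed

theorem lemma3p2:
  fixes r :: nat
  assumes "r \<ge> 1"
  shows "delta (3 * r + 1) \<ge> r"
  by (rule delta_ge) simp

end
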